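(* Let $P$ be a finite poset and $R$ a consistent restriction function on $P$. Let $H_\Gamma:\Gamma(P,R)\to\mathbb{Z}$ be the map $(p,k)\mapsto k$. Then there is a bijection $\varphi:\mathrm{Inc}^R(P)\to J(\Gamma(P,R))$ such that $\varphi\circ\mathrm{IncPro}=\mathrm{TogPro}_{H_\Gamma}\circ\varphi$.
   Context: A restriction function on $P$ assigns to each $p$ a nonempty finite $R(p)\subseteq\mathbb{Z}$; $\mathrm{Inc}^R(P)$ is the set of $f:P\to\mathbb{Z}$ with $f(p)\in R(p)$ and $p_1<p_2\Rightarrow f(p_1)<f(p_2)$. $R$ is consistent if for every cover $x\lessdot y$ in $P$, $\min R(x)<\min R(y)$ and $\max R(x)<\max R(y)$. $R(p)^*=R(p)\setminus\{\max R(p)\}$; $R(p)_{>k}$ (resp. $R(p)_{<k}$) is the smallest (resp. largest) element of $R(p)$ greater (resp. less) than $k$. $\Gamma(P,R)$ is the poset on $\{(p,k):p\in P, k\in R(p)^*\}$ whose order is the reflexive–transitive closure of the relation $(p_1,k_1)\lessdot(p_2,k_2)$, holding iff either (1) $p_1=p_2$ and $R(p_1)_{>k_2}=k_1$; or (2) $p_1\lessdot p_2$ in $P$, $k_1=R(p_1)_{<k_2}$, $k_1\neq\max R(p_1)$, and no $k\in R(p_2)$ with $k>k_2$ has $R(p_1)_{<k}=k_1$. Generalized Bender–Knuth involution: for $i\in\mathbb{Z}$ and $f\in\mathrm{Inc}^R(P)$, $\rho_i(f)(p)=R(p)_{>i}$ if $f(p)=i$ and the labeling obtained from $f$ by changing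 only the value at $p$ to $R(p)_{>i}$ lies in $\mathrm{Inc}^R(P)$; $\rho_i(f)(p)=i$ if $f(p)=R(p)_{>i}$ and the labeling obtained by changing only the value at $p$ to $i$ lies in $\mathrm{Inc}^R(P)$; otherwise $\rho_i(f)(p)=f(p)$. $\mathrm{IncPro}$ applies $\rho_i$ for all $i\in\mathbb{Z}$ in increasing order of $i$ (only finitely many act nontrivially), i.e. $\mathrm{IncPro}=\cdots\circ\rho_3\circ\rho_2\circ\rho_1\circ\cdots$. For a finite poset $Q$, $J(Q)$ is its set of order ideals. For $x\in Q$ the toggle $t_x:J(Q)\to J(Q)$ sends $I$ to $I\cup\{x\}$ if $x\notin I$ and this is an order ideal, to $I\setminus\{x\}$ if $x\in I$ and this is an order ideal, and to $I$ otherwise. For $H:Q\to\mathbb{Z}$ with $H(x)\ne H(y)$ whenever $x\lessdot y$ (a toggle order), $T_H^i$ is the product of the (pairwise commuting) toggles $t_x$ with $H(x)=i$, and $\mathrm{TogPro}_H$ applies $T_H^i$ in increasing order of $i$: $\mathrm{TogPro}_H=\cdots T_H^{2}T_H^1T_H^0T_H^{-1}T_H^{-2}\cdots$ (composition right to left). *)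

theory Defs
  imports "HOL-Library.FuncSet"
begin

text \<open>The finite poset P is a finite subset of a type with a partial order,
  carrying the induced order.  Covers are taken inside P.\<close>

definition covers :: "'a::order set \<Rightarrow> 'a \<Rightarrow> 'a \<Rightarrow> bool" where
  "covers P x y \<longleftrightarrow> x \<in> P \<and> y \<in> P \<and> x < y \<and> \<not> (\<exists>z\<in>P. x < z \<and> z < y)"

definition restriction_fun :: "'a set \<Rightarrow> ('a \<Rightarrow> int set) \<Rightarrow> bool" where
  "restriction_fun P R \<longleftrightarrow> (\<forall>p\<in>P. R p \<noteq> {} \<and> finite (R p))"

definition consistent :: "'a::order set \<Rightarrow> ('a \<Rightarrow> int set) \<Rightarrow> bool" where
  "consistent P R \<longleftrightarrow> (\<forall>x y. covers P x y \<longrightarrow> Min (R x) < Min (R y) \<and> Max (R x) < Max (R y))"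

definition is_succ :: "int set \<Rightarrow> int \<Rightarrow> int \<Rightarrow> bool" where
  "is_succ A k x \<longleftrightarrow> x \<in> A \<and> k < x \<and> (\<forall>y\<in>A. k < y \<longrightarrow> x \<le> y)"

definition is_pred :: "int set \<Rightarrow> int \<Rightarrow> int \<Rightarrow> bool" where
  "is_pred A k x \<longleftrightarrow> x \<in> A \<and> x < k \<and> (\<forall>y\<in>A. y < k \<longrightarrow> y \<le> x)"

definition IncR :: "'a::order set \<Rightarrow> ('a \<Rightarrow> int set) \<Rightarrow> ('a \<Rightarrow> int) set" where
  "IncR P R = {f. f \<in> extensional P \<and> (\<forall>p\<in>P. f p \<in> R p) \<and>
                  (\<forall>p1\<in>P. \<forall>p2\<in>P. p1 < p2 \<longrightarrow> f p1 < f p2)}"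

definition rho :: "'a::order set \<Rightarrow> ('a \<Rightarrow> int set) \<Rightarrow> int \<Rightarrow> ('a \<Rightarrow> int) \<Rightarrow> ('a \<Rightarrow> int)" where
  "rho P R i f = (\<lambda>p.
     if p \<in> P \<and> f p = i \<and> (\<exists>x. is_succ (R p) i x \<and> f(p := x) \<in> IncR P R)
       then (THE x. is_succ (R p) i x)
     else if p \<in> P \<and> is_succ (R p) i (f p) \<and> f(p := i) \<in> IncR P R then i
     else f p)"

text \<open>IncPro applies rho_i in increasing order of i.  Only i in the union of the
  R(p) can act nontrivially, so we compose over these values in increasing order.\<close>

definition IncPro :: "'a::order set \<Rightarrow> ('a \<Rightarrow> int set) \<Rightarrow> ('a \<Rightarrow> int) \<Rightarrow> ('a \<Rightarrow> int)" where
  "IncPro P R f = fold (rho P R) (sorted_list_of_set (\<Union>p\<in>P. R p)) f"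

definition Gamma :: "'a set \<Rightarrow> ('a \<Rightarrow> int set) \<Rightarrow> ('a \<times> int) set" where
  "Gamma P R = {(p, k). p \<in> P \<and> k \<in> R p - {Max (R p)}}"

definition gamma_cover :: "'a::order set \<Rightarrow> ('a \<Rightarrow> int set) \<Rightarrow> ('a \<times> int) \<Rightarrow> ('a \<times> int) \<Rightarrow> bool" where
  "gamma_cover P R a b \<longleftrightarrow> a \<in> Gamma P R \<and> b \<in> Gamma P R \<and>
     (let (p1, k1) = a; (p2, k2) = b in
       (p1 = p2 \<and> is_succ (R p1) k2 k1) \<or>
       (covers P p1 p2 \<and> is_pred (R p1) k2 k1 \<and> k1 \<noteq> Max (R p1) \<and>
        \<not> (\<exists>k\<in>R p2. k > k2 \<and> is_pred (R p1) k k1)))"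

definition gamma_le :: "'a::order set \<Rightarrow> ('a \<Rightarrow> int set) \<Rightarrow> ('a \<times> int) \<Rightarrow> ('a \<times> int) \<Rightarrow> bool" where
  "gamma_le P R = (gamma_cover P R)\<^sup>*\<^sup>*"

definition order_ideals :: "'b set \<Rightarrow> ('b \<Rightarrow> 'b \<Rightarrow> bool) \<Rightarrow> 'b set set" where
  "order_ideals Q le = {I. I \<subseteq> Q \<and> (\<forall>x\<in>I. \<forall>y\<in>Q. le y x \<longrightarrow> y \<in> I)}"

definition toggle :: "'b set \<Rightarrow> ('b \<Rightarrow> 'b \<Rightarrow> bool) \<Rightarrow> 'b \<Rightarrow> 'b set \<Rightarrow> 'b set" where
  "toggle Q le x I =
     (if x \<notin> I \<and> insert x I \<in> order_ideals Q le then insert x I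
      else if x \<in> I \<and> I - {x} \<in> order_ideals Q le then I - {x}
      else I)"

text \<open>T_H^i: product of the toggles t_x with H x = i (they pairwise commute,
  so we compose them in an arbitrary fixed enumeration).\<close>

definition togT :: "'b set \<Rightarrow> ('b \<Rightarrow> 'b \<Rightarrow> bool) \<Rightarrow> ('b \<Rightarrow> int) \<Rightarrow> int \<Rightarrow> 'b set \<Rightarrow> 'b set" where
  "togT Q le H i = fold (toggle Q le)
      (SOME xs. distinct xs \<and> set xs = {x\<in>Q. H x = i})"

definition TogPro :: "'b set \<Rightarrow> ('b \<Rightarrow> 'b \<Rightarrow> bool) \<Rightarrow> ('b \<Rightarrow> int) \<Rightarrow> 'b set \<Rightarrow> 'b set" where
  "TogPro Q le H I = fold (togT Q le H) (sorted_list_of_set (H ` Q)) I"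

end

theory Submission
  imports Defs
begin

text \<open>The bijection sends a labeling \<open>f\<close> to the set of pairs \<open>(p, k) \<in> \<Gamma>\<close> with
  \<open>f p \<le> k\<close>. Inside a fibre \<open>{p} \<times> R(p)\<^sup>*\<close> the covers of \<open>\<Gamma>\<close> go from larger to
  smaller \<open>k\<close>, so these sets are exactly the subsets of \<open>\<Gamma>\<close> closed upwards in every
  fibre; the cross-fibre covers are chosen so that closure under them says precisely
  \<open>f p1 < f p2\<close> for every cover \<open>p1 \<lessdot> p2\<close> of \<open>P\<close>, and consistency of \<open>R\<close> guarantees
  that such a cover exists whenever this inequality fails. Hence \<open>f\<close> is increasing iff
  its set is an order ideal. The move \<open>\<rho>\<^sub>i\<close> at \<open>p\<close> switches \<open>f p\<close> between \<open>i\<close> and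
  \<open>R(p)_{>i}\<close>, i.e. adds or removes \<open>(p, i)\<close>, and is allowed iff the result is again
  increasing, i.e. iff the toggle at \<open>(p, i)\<close> succeeds. Elements of \<open>\<Gamma>\<close> with equal
  second coordinate are never adjacent, so \<open>T\<^sup>i\<close> toggles them independently, just as
  \<open>\<rho>\<^sub>i\<close> acts on all \<open>p\<close> at once.\<close>

lemma is_succ_unique: "is_succ A k x \<Longrightarrow> is_succ A k y \<Longrightarrow> x = y"
  unfolding is_succ_def by (meson antisym)

lemma is_succ_exists:
  assumes "finite A" "x \<in> A" "k < x"
  shows "\<exists>s. is_succ A k s"
proof -
  let ?S = "{y\<in>A. k < y}"
  have "finite ?S" "?S \<noteq> {}" using assms by auto
  then have "Min ?S \<in> ?S" "\<forall>y\<in>?S. Min ?S \<le> y" using Min_in by auto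
  then show ?thesis unfolding is_succ_def by blast
qed

lemma is_pred_exists:
  assumes "finite A" "x \<in> A" "x < k"
  shows "\<exists>s. is_pred A k s"
proof -
  let ?S = "{y\<in>A. y < k}"
  have "finite ?S" "?S \<noteq> {}" using assms by auto
  then have "Max ?S \<in> ?S" "\<forall>y\<in>?S. y \<le> Max ?S" using Max_in by auto
  then show ?thesis unfolding is_pred_def by blast
qed

lemma is_succ_if_is_pred: "is_pred A k k' \<Longrightarrow> k \<in> A \<Longrightarrow> is_succ A k' k"
  unfolding is_pred_def is_succ_def by force

lemma is_succ_le_iff: "is_succ A i s \<Longrightarrow> k \<in> A \<Longrightarrow> k \<noteq> i \<Longrightarrow> i \<le> k \<longleftrightarrow> s \<le> k"
  unfolding is_succ_def by force

lemma fold_filter_neutral: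
  "(\<And>x. x \<in> set xs \<Longrightarrow> \<not> Pr x \<Longrightarrow> g x = id) \<Longrightarrow> fold g xs = fold g (filter Pr xs)"
  by (induction xs) auto

lemma less_if_less_on_covers:
  fixes P :: "'a::order set" and g :: "'a \<Rightarrow> 'b::order"
  assumes fin: "finite P" and cov: "\<And>x y. covers P x y \<Longrightarrow> g x < g y"
  shows "x \<in> P \<Longrightarrow> y \<in> P \<Longrightarrow> x < y \<Longrightarrow> g x < g y"
proof (induction "card {z\<in>P. x < z \<and> z < y}" arbitrary: x y rule: less_induct)
  case less
  show ?case
  proof (cases "\<exists>z\<in>P. x < z \<and> z < y")
    case False
    then show ?thesis using less.prems cov by (simp add: covers_def)
  next
    case True
    then obtain z where z: "z \<in> P" "x < z" "z < y" by blast
    have fin_between: "finite {w\<in>P. x < w \<and> w < y}" using fin by simp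
    have "card {w\<in>P. x < w \<and> w < z} < card {w\<in>P. x < w \<and> w < y}"
      by (rule psubset_card_mono[OF fin_between]) (use z in \<open>auto intro: less_trans\<close>)
    moreover have "card {w\<in>P. z < w \<and> w < y} < card {w\<in>P. x < w \<and> w < y}"
      by (rule psubset_card_mono[OF fin_between]) (use z in \<open>auto intro: less_trans\<close>)
    ultimately show ?thesis using less.hyps less.prems z by (meson less_trans)
  qed
qed

definition toggle_all :: "'b set \<Rightarrow> ('b \<Rightarrow> 'b \<Rightarrow> bool) \<Rightarrow> 'b set \<Rightarrow> 'b set \<Rightarrow> 'b set" where
  "toggle_all Q le S J = {z. if z \<in> S then z \<in> toggle Q le z J else z \<in> J}"

lemma toggle_order_ideal:
  "J \<in> order_ideals Q le \<Longrightarrow> toggle Q le x J \<in> order_ideals Q le"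
  unfolding toggle_def by auto

lemma fold_toggle_order_ideal:
  "J \<in> order_ideals Q le \<Longrightarrow> fold (toggle Q le) xs J \<in> order_ideals Q le"
  by (induction xs arbitrary: J) (auto intro: toggle_order_ideal)

lemma mem_toggle_other: "z \<noteq> y \<Longrightarrow> z \<in> toggle Q le y J \<longleftrightarrow> z \<in> J"
  unfolding toggle_def by auto

lemma togT_eq_id:
  assumes "i \<notin> H ` Q"
  shows "togT Q le H i = id"
proof -
  have "{x\<in>Q. H x = i} = {}" using assms by auto
  then have "(SOME xs. distinct xs \<and> set xs = {x\<in>Q. H x = i}) = []"
    by (metis (mono_tags, lifting) distinct.simps(1) set_empty2 some_equality)
  then show ?thesis unfolding togT_def by simp
qed

lemma TogPro_eq_fold_superset:
  assumes "finite U" "H ` Q \<subseteq> U"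
  shows "fold (togT Q le H) (sorted_list_of_set U) = TogPro Q le H"
proof -
  have "fold (togT Q le H) (sorted_list_of_set U) =
        fold (togT Q le H) (filter (\<lambda>i. i \<in> H ` Q) (sorted_list_of_set U))"
    by (rule fold_filter_neutral) (auto intro: togT_eq_id)
  also have "filter (\<lambda>i. i \<in> H ` Q) (sorted_list_of_set U) = sorted_list_of_set (H ` Q)"
  proof (rule sorted_distinct_set_unique)
    show "set (filter (\<lambda>i. i \<in> H ` Q) (sorted_list_of_set U)) = set (sorted_list_of_set (H ` Q))"
      using assms finite_subset[OF assms(2,1)] by auto
  qed (auto intro: sorted_wrt_filter)
  finally show ?thesis unfolding TogPro_def by (simp add: fun_eq_iff)
qed

locale cover_relation =
  fixes Q :: "'b set" and c :: "'b \<Rightarrow> 'b \<Rightarrow> bool"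
  assumes cover_in: "\<And>a b. c a b \<Longrightarrow> a \<in> Q \<and> b \<in> Q" and irrefl: "\<And>y. \<not> c y y"
begin

lemma order_ideals_iff:
  "I \<in> order_ideals Q c\<^sup>*\<^sup>* \<longleftrightarrow> I \<subseteq> Q \<and> (\<forall>a b. c a b \<longrightarrow> b \<in> I \<longrightarrow> a \<in> I)"
proof
  assume "I \<in> order_ideals Q c\<^sup>*\<^sup>*"
  then show "I \<subseteq> Q \<and> (\<forall>a b. c a b \<longrightarrow> b \<in> I \<longrightarrow> a \<in> I)"
    unfolding order_ideals_def using cover_in by blast
next
  assume I: "I \<subseteq> Q \<and> (\<forall>a b. c a b \<longrightarrow> b \<in> I \<longrightarrow> a \<in> I)"
  have "c\<^sup>*\<^sup>* y x \<Longrightarrow> x \<in> I \<Longrightarrow> y \<in> I" for y x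
    by (induction rule: converse_rtranclp_induct) (use I in auto)
  then show "I \<in> order_ideals Q c\<^sup>*\<^sup>*" unfolding order_ideals_def using I by auto
qed

lemma insert_order_ideal_iff:
  assumes "J \<in> order_ideals Q c\<^sup>*\<^sup>*" "y \<in> Q"
  shows "insert y J \<in> order_ideals Q c\<^sup>*\<^sup>* \<longleftrightarrow> (\<forall>a. c a y \<longrightarrow> a \<in> J)"
  using assms irrefl unfolding order_ideals_iff by blast

lemma remove_order_ideal_iff:
  assumes "J \<in> order_ideals Q c\<^sup>*\<^sup>*"
  shows "J - {y} \<in> order_ideals Q c\<^sup>*\<^sup>* \<longleftrightarrow> (\<forall>b\<in>J. \<not> c y b)"
  using assms irrefl unfolding order_ideals_iff by blast

lemma mem_toggle_iff:
  assumes "J \<in> order_ideals Q c\<^sup>*\<^sup>*" "y \<in> Q"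
  shows "y \<in> toggle Q c\<^sup>*\<^sup>* y J \<longleftrightarrow>
     (y \<notin> J \<and> (\<forall>a. c a y \<longrightarrow> a \<in> J)) \<or> (y \<in> J \<and> (\<exists>b\<in>J. c y b))"
  using insert_order_ideal_iff[OF assms] remove_order_ideal_iff[OF assms(1), of y]
  unfolding toggle_def by auto

text \<open>Toggles at pairwise non-adjacent elements see only unchanged neighbours,
  so applying them one after another is the same as applying them all at once.\<close>

lemma fold_toggle_eq_toggle_all:
  "distinct xs \<Longrightarrow> set xs \<subseteq> Q \<Longrightarrow> (\<forall>a\<in>set xs. \<forall>b\<in>set xs. \<not> c a b) \<Longrightarrow>
     J \<in> order_ideals Q c\<^sup>*\<^sup>* \<Longrightarrow> fold (toggle Q c\<^sup>*\<^sup>*) xs J = toggle_all Q c\<^sup>*\<^sup>* (set xs) J"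
proof (induction xs arbitrary: J)
  case Nil
  then show ?case by (simp add: toggle_all_def)
next
  case (Cons x xs)
  let ?J' = "toggle Q c\<^sup>*\<^sup>* x J"
  have J': "?J' \<in> order_ideals Q c\<^sup>*\<^sup>*" using Cons.prems(4) by (rule toggle_order_ideal)
  have "toggle_all Q c\<^sup>*\<^sup>* (set xs) ?J' = toggle_all Q c\<^sup>*\<^sup>* (set (x # xs)) J"
  proof (rule set_eqI)
    fix z
    show "z \<in> toggle_all Q c\<^sup>*\<^sup>* (set xs) ?J' \<longleftrightarrow> z \<in> toggle_all Q c\<^sup>*\<^sup>* (set (x # xs)) J"
    proof (cases "z \<in> set xs")
      case True
      then have "z \<noteq> x" "z \<in> Q" "\<And>a. c a z \<Longrightarrow> a \<noteq> x" "\<And>b. c z b \<Longrightarrow> b \<noteq> x"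
        using Cons.prems(1-3) by auto
      moreover have "\<And>w. w \<noteq> x \<Longrightarrow> w \<in> ?J' \<longleftrightarrow> w \<in> J" by (rule mem_toggle_other)
      ultimately have "z \<in> toggle Q c\<^sup>*\<^sup>* z ?J' \<longleftrightarrow> z \<in> toggle Q c\<^sup>*\<^sup>* z J"
        unfolding mem_toggle_iff[OF J' \<open>z \<in> Q\<close>] mem_toggle_iff[OF Cons.prems(4) \<open>z \<in> Q\<close>]
        by blast
      then show ?thesis using True \<open>z \<noteq> x\<close> by (simp add: toggle_all_def)
    next
      case False
      then show ?thesis by (cases "z = x") (simp_all add: toggle_all_def mem_toggle_other)
    qed
  qed
  then show ?case using Cons J' by simp
qed

lemma togT_eq_toggle_all:
  assumes "finite Q" and "\<And>a b. c a b \<Longrightarrow> H a \<noteq> H b" and "J \<in> order_ideals Q c\<^sup>*\<^sup>*"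
  shows "togT Q c\<^sup>*\<^sup>* H i J = toggle_all Q c\<^sup>*\<^sup>* {x\<in>Q. H x = i} J"
proof -
  define xs where "xs = (SOME xs. distinct xs \<and> set xs = {x\<in>Q. H x = i})"
  have "finite {x\<in>Q. H x = i}" using assms(1) by simp
  then have "\<exists>xs. distinct xs \<and> set xs = {x\<in>Q. H x = i}"
    using finite_distinct_list by blast
  then have xs: "distinct xs \<and> set xs = {x\<in>Q. H x = i}"
    unfolding xs_def by (rule someI_ex)
  have "togT Q c\<^sup>*\<^sup>* H i = fold (toggle Q c\<^sup>*\<^sup>*) xs"
    unfolding togT_def xs_def ..
  moreover have "fold (toggle Q c\<^sup>*\<^sup>*) xs J = toggle_all Q c\<^sup>*\<^sup>* (set xs) J"
    by (rule fold_toggle_eq_toggle_all) (use xs assms(3) in \<open>auto dest: assms(2)\<close>)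
  ultimately show ?thesis using xs by simp
qed

end

definition labelings :: "'a set \<Rightarrow> ('a \<Rightarrow> int set) \<Rightarrow> ('a \<Rightarrow> int) set" where
  "labelings P R = {f. f \<in> extensional P \<and> (\<forall>p\<in>P. f p \<in> R p)}"

definition label_ideal :: "'a set \<Rightarrow> ('a \<Rightarrow> int set) \<Rightarrow> ('a \<Rightarrow> int) \<Rightarrow> ('a \<times> int) set" where
  "label_ideal P R f = {x \<in> Gamma P R. f (fst x) \<le> snd x}"

lemma mem_Gamma_iff: "(p, k) \<in> Gamma P R \<longleftrightarrow> p \<in> P \<and> k \<in> R p \<and> k \<noteq> Max (R p)"
  by (simp add: Gamma_def)

lemma mem_label_ideal_iff: "(p, k) \<in> label_ideal P R f \<longleftrightarrow> (p, k) \<in> Gamma P R \<and> f p \<le> k"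
  by (simp add: label_ideal_def)

lemma gamma_cover_iff:
  "gamma_cover P R (p1, k1) (p2, k2) \<longleftrightarrow> (p1, k1) \<in> Gamma P R \<and> (p2, k2) \<in> Gamma P R \<and>
     ((p1 = p2 \<and> is_succ (R p1) k2 k1) \<or>
      (covers P p1 p2 \<and> is_pred (R p1) k2 k1 \<and> k1 \<noteq> Max (R p1) \<and>
       \<not> (\<exists>k\<in>R p2. k > k2 \<and> is_pred (R p1) k k1)))"
  by (simp add: gamma_cover_def)

lemma gamma_cover_snd_neq: "gamma_cover P R a b \<Longrightarrow> snd a \<noteq> snd b"
  by (cases a; cases b) (auto simp: gamma_cover_iff is_succ_def is_pred_def)

interpretation gamma: cover_relation "Gamma P R" "gamma_cover P R"
  by unfold_locales (simp add: gamma_cover_def, metis gamma_cover_snd_neq)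

lemma IncR_eq: "IncR P R = {f \<in> labelings P R. \<forall>p1\<in>P. \<forall>p2\<in>P. p1 < p2 \<longrightarrow> f p1 < f p2}"
  unfolding IncR_def labelings_def by auto

lemma fun_upd_in_labelings:
  "f \<in> labelings P R \<Longrightarrow> q \<in> P \<Longrightarrow> v \<in> R q \<Longrightarrow> f(q := v) \<in> labelings P R"
  unfolding labelings_def extensional_def by auto

lemma rho_eq_if_succ:
  assumes "p \<in> P" and s: "is_succ (R p) i s"
  shows "rho P R i f p =
    (if f p = i \<and> f(p := s) \<in> IncR P R then s
     else if f p = s \<and> f(p := i) \<in> IncR P R then i else f p)"
proof -
  have "(THE x. is_succ (R p) i x) = s" using s is_succ_unique by blast
  then show ?thesis unfolding rho_def using assms is_succ_unique by auto
qed

lemma rho_eq_if_no_succ: "\<nexists>s. is_succ (R p) i s \<Longrightarrow> rho P R i f p = f p"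
  unfolding rho_def by auto

lemma rho_in_labelings:
  assumes f: "f \<in> labelings P R"
  shows "rho P R i f \<in> labelings P R"
proof -
  have "rho P R i f p \<in> R p" if p: "p \<in> P" for p
  proof (cases "\<exists>s. is_succ (R p) i s")
    case True
    then obtain s where s: "is_succ (R p) i s" ..
    have "f(p := i) \<in> IncR P R \<Longrightarrow> i \<in> R p"
      using p unfolding IncR_def by (metis (mono_tags, lifting) fun_upd_same mem_Collect_eq)
    then show ?thesis
      using f p s unfolding rho_eq_if_succ[where R = R, OF p s] labelings_def is_succ_def by auto
  next
    case False
    then show ?thesis using f p by (simp add: rho_eq_if_no_succ labelings_def)
  qed
  moreover have "rho P R i f \<in> extensional P"
    using f unfolding labelings_def extensional_def rho_def by auto
  ultimately show ?thesis by (simp add: labelings_def)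
qed

lemma rho_le_iff:
  assumes "p \<in> P" "k \<in> R p" "k \<noteq> i"
  shows "rho P R i f p \<le> k \<longleftrightarrow> f p \<le> k"
proof (cases "\<exists>s. is_succ (R p) i s")
  case True
  then obtain s where s: "is_succ (R p) i s" ..
  then show ?thesis
    using is_succ_le_iff[OF s assms(2,3)] unfolding rho_eq_if_succ[where R = R, OF assms(1) s] by auto
qed (simp add: rho_eq_if_no_succ)

locale restricted_poset =
  fixes P :: "'a::order set" and R :: "'a \<Rightarrow> int set"
  assumes finite_P: "finite P" and restriction: "restriction_fun P R" and consistent: "consistent P R"
begin

abbreviation ideals :: "('a \<times> int) set set" where
  "ideals \<equiv> order_ideals (Gamma P R) (gamma_cover P R)\<^sup>*\<^sup>*"

lemma finite_R: "p \<in> P \<Longrightarrow> finite (R p)" and R_nonempty: "p \<in> P \<Longrightarrow> R p \<noteq> {}"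
  using restriction unfolding restriction_fun_def by auto

lemma finite_Gamma: "finite (Gamma P R)"
proof (rule finite_subset)
  show "Gamma P R \<subseteq> Sigma P R" by (auto simp: Gamma_def)
  show "finite (Sigma P R)" using finite_P finite_R by (rule finite_SigmaI)
qed

text \<open>With \<open>k1 = R(p1)_{<v}\<close>, the element \<open>k2\<close> is the largest element of \<open>R(p2)\<close>
  with the same predecessor \<open>k1\<close> in \<open>R(p1)\<close>.\<close>

lemma gamma_cover_across:
  assumes cv: "covers P p1 p2" and v: "v \<in> R p2"
    and k1: "is_pred (R p1) v k1" "k1 \<noteq> Max (R p1)"
  shows "\<exists>k2\<ge>v. gamma_cover P R (p1, k1) (p2, k2)"
proof -
  have p12: "p1 \<in> P" "p2 \<in> P" using cv by (auto simp: covers_def)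
  have Max_less: "Max (R p1) < Max (R p2)" using consistent cv unfolding consistent_def by auto
  define S where "S = {k\<in>R p2. is_pred (R p1) k k1}"
  have finS: "finite S" using finite_R[OF p12(2)] unfolding S_def by simp
  have vS: "v \<in> S" using v k1 unfolding S_def by simp
  define k2 where "k2 = Max S"
  have "k2 \<in> S" "v \<le> k2" using finS vS Max_in unfolding k2_def by auto
  then have k2: "k2 \<in> R p2" "is_pred (R p1) k2 k1" "v \<le> k2" unfolding S_def by auto
  have "\<not> (\<exists>k\<in>R p2. k > k2 \<and> is_pred (R p1) k k1)"
    using finS unfolding S_def k2_def by (auto simp: not_less)
  moreover have "k2 \<noteq> Max (R p2)"
  proof
    assume "k2 = Max (R p2)"
    then have "Max (R p1) \<le> k1"
      using k2(2) Max_less finite_R[OF p12(1)] R_nonempty[OF p12(1)] unfolding is_pred_def by auto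
    moreover have "k1 \<le> Max (R p1)" using k1 finite_R[OF p12(1)] unfolding is_pred_def by simp
    ultimately show False using k1(2) by simp
  qed
  ultimately have "gamma_cover P R (p1, k1) (p2, k2)"
    using p12 k1 k2 cv unfolding gamma_cover_iff mem_Gamma_iff is_pred_def by blast
  then show ?thesis using k2(3) by blast
qed

lemma less_on_cover_if_ideal:
  assumes f: "f \<in> labelings P R" and I: "label_ideal P R f \<in> ideals" and cv: "covers P p1 p2"
  shows "f p1 < f p2"
proof -
  have p12: "p1 \<in> P" "p2 \<in> P" using cv by (auto simp: covers_def)
  have f12: "f p1 \<in> R p1" "f p2 \<in> R p2" using f p12 unfolding labelings_def by auto
  have Min_less: "Min (R p1) < Min (R p2)" and Max_less: "Max (R p1) < Max (R p2)"
    using consistent cv unfolding consistent_def by auto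
  have f1_le: "f p1 \<le> Max (R p1)" using finite_R[OF p12(1)] f12 by simp
  show ?thesis
  proof (cases "f p2 = Max (R p2)")
    case True
    then show ?thesis using f1_le Max_less by simp
  next
    case False
    have "Min (R p1) < f p2" using Min_less Min_le[OF finite_R[OF p12(2)] f12(2)] by linarith
    then obtain k1 where k1: "is_pred (R p1) (f p2) k1"
      using is_pred_exists finite_R[OF p12(1)] R_nonempty[OF p12(1)] by (meson Min_in)
    show ?thesis
    proof (cases "k1 = Max (R p1)")
      case True
      then show ?thesis using f1_le k1 unfolding is_pred_def by simp
    next
      case False
      then obtain k2 where "f p2 \<le> k2" "gamma_cover P R (p1, k1) (p2, k2)"
        using gamma_cover_across[OF cv f12(2) k1] by blast
      then have "(p1, k1) \<in> label_ideal P R f"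
        using I gamma.order_ideals_iff gamma_cover_iff mem_label_ideal_iff by metis
      then show ?thesis using k1 unfolding mem_label_ideal_iff is_pred_def by simp
    qed
  qed
qed

lemma IncR_iff_label_ideal:
  assumes f: "f \<in> labelings P R"
  shows "f \<in> IncR P R \<longleftrightarrow> label_ideal P R f \<in> ideals"
proof
  assume inc: "f \<in> IncR P R"
  have "a \<in> label_ideal P R f"
    if cv: "gamma_cover P R a b" and b: "b \<in> label_ideal P R f" for a b
  proof -
    obtain p1 k1 p2 k2 where ab: "a = (p1, k1)" "b = (p2, k2)" by (cases a; cases b)
    have "f p2 \<le> k2" using b ab by (simp add: mem_label_ideal_iff)
    moreover have "(p1 = p2 \<and> is_succ (R p1) k2 k1) \<or> (covers P p1 p2 \<and> is_pred (R p1) k2 k1)"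
      using cv unfolding ab gamma_cover_iff by blast
    moreover have "covers P p1 p2 \<Longrightarrow> f p1 < f p2 \<and> f p1 \<in> R p1"
      using inc unfolding IncR_def covers_def by auto
    ultimately have "f p1 \<le> k1" unfolding is_succ_def is_pred_def by force
    then show ?thesis using cv ab by (simp add: gamma_cover_def mem_label_ideal_iff)
  qed
  then show "label_ideal P R f \<in> ideals"
    unfolding gamma.order_ideals_iff by (auto simp: label_ideal_def)
next
  assume "label_ideal P R f \<in> ideals"
  then have "\<And>x y. covers P x y \<Longrightarrow> f x < f y" using less_on_cover_if_ideal[OF f] by blast
  then show "f \<in> IncR P R"
    using f less_if_less_on_covers[OF finite_P] unfolding IncR_eq by blast
qed

lemma label_ideal_inj_on: "inj_on (label_ideal P R) (labelings P R)"
proof (rule inj_onI)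
  fix f g assume f: "f \<in> labelings P R" and g: "g \<in> labelings P R"
    and eq: "label_ideal P R f = label_ideal P R g"
  have "f p \<le> g p" if "f \<in> labelings P R" "g \<in> labelings P R"
    and fg_eq: "label_ideal P R f = label_ideal P R g" and p: "p \<in> P" for f g p
  proof (rule ccontr)
    assume lt: "\<not> f p \<le> g p"
    have "f p \<le> Max (R p)" "g p \<in> R p" using that p finite_R unfolding labelings_def by auto
    then have "(p, g p) \<in> label_ideal P R g" using lt p by (simp add: mem_label_ideal_iff mem_Gamma_iff)
    then have "(p, g p) \<in> label_ideal P R f" using fg_eq by simp
    then show False using lt by (simp add: mem_label_ideal_iff)
  qed
  then have "\<forall>p\<in>P. f p = g p" using f g eq by (metis order_antisym)
  then show "f = g" using f g unfolding labelings_def by (auto intro: extensionalityI)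
qed

lemma ideal_fibre_up_closed:
  assumes J: "J \<in> ideals" and k0: "(p, k0) \<in> J"
  shows "(p, k) \<in> Gamma P R \<Longrightarrow> k0 \<le> k \<Longrightarrow> (p, k) \<in> J"
proof (induction "nat (k - k0)" arbitrary: k rule: less_induct)
  case less
  show ?case
  proof (cases "k = k0")
    case True
    then show ?thesis using k0 by simp
  next
    case False
    have pk: "p \<in> P" "k \<in> R p" "k \<le> Max (R p)"
      using less.prems finite_R by (auto simp: mem_Gamma_iff)
    have "(p, k0) \<in> Gamma P R" using k0 J gamma.order_ideals_iff by blast
    then have k0R: "k0 \<in> R p" by (simp add: mem_Gamma_iff)
    obtain k' where k': "is_pred (R p) k k'"
      using is_pred_exists[OF finite_R[OF pk(1)] k0R] False less.prems(2) by force
    have "k0 \<le> k'" "k' < k" "k' \<in> R p" using k' k0R False less.prems(2) unfolding is_pred_def by auto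
    then have "(p, k') \<in> Gamma P R" "(p, k') \<in> J"
      using less.hyps[of k'] pk by (auto simp: mem_Gamma_iff)
    moreover have "gamma_cover P R (p, k) (p, k')"
      using less.prems(1) \<open>(p, k') \<in> Gamma P R\<close> is_succ_if_is_pred[OF k' pk(2)]
      by (simp add: gamma_cover_iff)
    ultimately show ?thesis using J gamma.order_ideals_iff by blast
  qed
qed

text \<open>The inverse of \<open>label_ideal\<close>: \<open>f p\<close> is the least \<open>k\<close> with \<open>(p, k) \<in> J\<close>,
  and \<open>Max (R p)\<close> if there is none.\<close>

lemma label_ideal_surj:
  assumes J: "J \<in> ideals"
  shows "\<exists>f\<in>labelings P R. label_ideal P R f = J"
proof -
  have JG: "J \<subseteq> Gamma P R" using J gamma.order_ideals_iff by blast
  define T where "T p = insert (Max (R p)) {k\<in>R p. (p, k) \<in> J}" for p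
  define f where "f = restrict (\<lambda>p. Min (T p)) P"
  have T: "finite (T p)" "T p \<subseteq> R p" if "p \<in> P" for p
    using that finite_R R_nonempty unfolding T_def by auto
  have fT: "f p \<in> T p" "\<And>k. k \<in> T p \<Longrightarrow> f p \<le> k" if p: "p \<in> P" for p
  proof -
    have "T p \<noteq> {}" by (simp add: T_def)
    then show "f p \<in> T p" "\<And>k. k \<in> T p \<Longrightarrow> f p \<le> k" using T[OF p] p unfolding f_def by auto
  qed
  have f: "f \<in> labelings P R" using fT T unfolding labelings_def f_def by auto
  have "(p, k) \<in> label_ideal P R f \<longleftrightarrow> (p, k) \<in> J" for p k
  proof
    assume "(p, k) \<in> J"
    then show "(p, k) \<in> label_ideal P R f"
      using JG fT(2)[of p k] by (auto simp: mem_label_ideal_iff mem_Gamma_iff T_def)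
  next
    assume x: "(p, k) \<in> label_ideal P R f"
    then have G: "(p, k) \<in> Gamma P R" and le: "f p \<le> k" and pP: "p \<in> P"
      by (auto simp: mem_label_ideal_iff mem_Gamma_iff)
    then have "k < Max (R p)" using finite_R[OF pP] by (simp add: mem_Gamma_iff order_less_le)
    then have "f p \<noteq> Max (R p)" using le by simp
    then have "(p, f p) \<in> J" using fT(1)[OF pP] unfolding T_def by blast
    then show "(p, k) \<in> J" using ideal_fibre_up_closed[OF J _ G le] by simp
  qed
  then have "label_ideal P R f = J" by (simp add: set_eq_iff split_paired_all)
  then show ?thesis using f by blast
qed

lemma label_ideal_bij: "bij_betw (label_ideal P R) (IncR P R) ideals"
proof (rule bij_betw_imageI)
  show "inj_on (label_ideal P R) (IncR P R)"
    using label_ideal_inj_on by (rule inj_on_subset) (auto simp: IncR_eq)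
  show "label_ideal P R ` IncR P R = ideals"
    using IncR_iff_label_ideal label_ideal_surj unfolding IncR_eq by fastforce
qed

lemma label_ideal_fun_upd_succ:
  assumes p: "p \<in> P" and s: "is_succ (R p) i s" and i: "i \<in> R p"
  shows "label_ideal P R (f(p := i)) = insert (p, i) (label_ideal P R (f(p := s)))"
    and "(p, i) \<notin> label_ideal P R (f(p := s))"
proof -
  have "s \<in> R p" "i < s" using s unfolding is_succ_def by auto
  moreover have "s \<le> Max (R p)" using finite_R[OF p] \<open>s \<in> R p\<close> by simp
  ultimately have "(p, i) \<in> Gamma P R" using p i by (simp add: mem_Gamma_iff)
  then show "label_ideal P R (f(p := i)) = insert (p, i) (label_ideal P R (f(p := s)))"
    using is_succ_le_iff[OF s] \<open>i < s\<close>
    by (auto simp: set_eq_iff split_paired_all mem_label_ideal_iff mem_Gamma_iff)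
  show "(p, i) \<notin> label_ideal P R (f(p := s))"
    using \<open>i < s\<close> by (simp add: mem_label_ideal_iff)
qed

lemma rho_at_value_iff_toggle:
  assumes f: "f \<in> labelings P R" and p: "p \<in> P" and fp: "f p = i" and s: "is_succ (R p) i s"
  shows "rho P R i f p \<le> i \<longleftrightarrow>
    (p, i) \<in> toggle (Gamma P R) (gamma_cover P R)\<^sup>*\<^sup>* (p, i) (label_ideal P R f)"
proof -
  let ?I' = "label_ideal P R (f(p := s))"
  have i: "i \<in> R p" and "s \<in> R p" "i < s" using f p fp s unfolding labelings_def is_succ_def by auto
  have "label_ideal P R f = insert (p, i) ?I'" "(p, i) \<notin> ?I'"
    using label_ideal_fun_upd_succ[OF p s i, of f] fp by (simp_all add: fun_upd_idem)
  moreover have "f(p := s) \<in> IncR P R \<longleftrightarrow> ?I' \<in> ideals"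
    using IncR_iff_label_ideal fun_upd_in_labelings[OF f p \<open>s \<in> R p\<close>] by blast
  ultimately show ?thesis
    using \<open>i < s\<close> fp unfolding rho_eq_if_succ[where R = R, OF p s] toggle_def by auto
qed

lemma rho_at_succ_iff_toggle:
  assumes f: "f \<in> labelings P R" and p: "p \<in> P" and fp: "f p = s" and s: "is_succ (R p) i s"
    and i: "i \<in> R p"
  shows "rho P R i f p \<le> i \<longleftrightarrow>
    (p, i) \<in> toggle (Gamma P R) (gamma_cover P R)\<^sup>*\<^sup>* (p, i) (label_ideal P R f)"
proof -
  have "i < s" using s unfolding is_succ_def by auto
  have "label_ideal P R (f(p := i)) = insert (p, i) (label_ideal P R f)"
    "(p, i) \<notin> label_ideal P R f"
    using label_ideal_fun_upd_succ[OF p s i, of f] fp by (simp_all add: fun_upd_idem)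
  moreover have "f(p := i) \<in> IncR P R \<longleftrightarrow> label_ideal P R (f(p := i)) \<in> ideals"
    using IncR_iff_label_ideal fun_upd_in_labelings[OF f p i] by blast
  ultimately show ?thesis
    using \<open>i < s\<close> fp unfolding rho_eq_if_succ[where R = R, OF p s] toggle_def by auto
qed

text \<open>If \<open>f p\<close> is neither \<open>i\<close> nor \<open>R(p)_{>i}\<close>, the toggle at \<open>(p, i)\<close> is blocked:
  by the neighbour \<open>(p, R(p)_{<i})\<close> in the ideal, or by the missing neighbour \<open>(p, R(p)_{>i})\<close>.\<close>

lemma rho_elsewhere_iff_toggle:
  assumes f: "f \<in> IncR P R" and p: "p \<in> P" and s: "is_succ (R p) i s"
    and i: "i \<in> R p" and fp: "f p \<noteq> i" "f p \<noteq> s"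
  shows "rho P R i f p \<le> i \<longleftrightarrow>
    (p, i) \<in> toggle (Gamma P R) (gamma_cover P R)\<^sup>*\<^sup>* (p, i) (label_ideal P R f)"
proof -
  let ?I = "label_ideal P R f"
  have fR: "f p \<in> R p" and I: "?I \<in> ideals"
    using f p IncR_iff_label_ideal unfolding IncR_eq labelings_def by auto
  have "s \<in> R p" "i < s" "s \<le> Max (R p)" using s finite_R[OF p] unfolding is_succ_def by auto
  then have Gi: "(p, i) \<in> Gamma P R" using p i by (auto simp: mem_Gamma_iff)
  have rho: "rho P R i f p = f p" using fp unfolding rho_eq_if_succ[where R = R, OF p s] by simp
  show ?thesis
  proof (cases "f p < i")
    case True
    obtain k where k: "is_pred (R p) i k" using is_pred_exists[OF finite_R[OF p] fR True] ..
    then have "(p, k) \<in> ?I" "gamma_cover P R (p, i) (p, k)" "(p, i) \<in> ?I"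
      using fR True Gi is_succ_if_is_pred[OF k i] \<open>i < s\<close> \<open>s \<le> Max (R p)\<close> p
      by (auto simp: mem_label_ideal_iff mem_Gamma_iff gamma_cover_iff is_pred_def)
    then show ?thesis using gamma.mem_toggle_iff[OF I Gi] rho True by auto
  next
    case False
    then have "s < f p" using s fR fp unfolding is_succ_def by force
    moreover have "f p \<le> Max (R p)" using fR finite_R[OF p] by simp
    ultimately have "gamma_cover P R (p, s) (p, i)" "(p, s) \<notin> ?I" "(p, i) \<notin> ?I"
      using Gi s \<open>s \<in> R p\<close> \<open>i < s\<close> p by (auto simp: mem_label_ideal_iff mem_Gamma_iff gamma_cover_iff)
    then show ?thesis using gamma.mem_toggle_iff[OF I Gi] rho \<open>s < f p\<close> \<open>i < s\<close> by auto
  qed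
qed

lemma label_ideal_rho:
  assumes f: "f \<in> IncR P R"
  shows "label_ideal P R (rho P R i f) =
    toggle_all (Gamma P R) (gamma_cover P R)\<^sup>*\<^sup>* {x\<in>Gamma P R. (\<lambda>(p, k). k) x = i}
      (label_ideal P R f)"
proof -
  have fl: "f \<in> labelings P R" using f IncR_eq by blast
  have "(p, k) \<in> label_ideal P R (rho P R i f) \<longleftrightarrow>
      (p, i) \<in> toggle (Gamma P R) (gamma_cover P R)\<^sup>*\<^sup>* (p, i) (label_ideal P R f)"
    if G: "(p, k) \<in> Gamma P R" and ki: "k = i" for p k
  proof -
    have p: "p \<in> P" and i: "i \<in> R p" "i < Max (R p)"
      using G ki finite_R by (auto simp: mem_Gamma_iff order_less_le)
    obtain s where s: "is_succ (R p) i s"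
      using is_succ_exists[OF finite_R[OF p] Max_in[OF finite_R[OF p] R_nonempty[OF p]] i(2)] ..
    consider "f p = i" | "f p = s" | "f p \<noteq> i" "f p \<noteq> s" by blast
    then have "rho P R i f p \<le> i \<longleftrightarrow>
        (p, i) \<in> toggle (Gamma P R) (gamma_cover P R)\<^sup>*\<^sup>* (p, i) (label_ideal P R f)"
      by cases (use rho_at_value_iff_toggle[OF fl p _ s] rho_at_succ_iff_toggle[OF fl p _ s i(1)]
          rho_elsewhere_iff_toggle[OF f p s i(1)] in blast)+
    then show ?thesis using G ki by (simp add: mem_label_ideal_iff)
  qed
  moreover have "(p, k) \<in> label_ideal P R (rho P R i f) \<longleftrightarrow> (p, k) \<in> label_ideal P R f"
    if "k \<noteq> i" for p k
    using rho_le_iff[where P = P and R = R and p = p and k = k] that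
    by (auto simp: mem_label_ideal_iff mem_Gamma_iff)
  ultimately show ?thesis
    by (auto simp: set_eq_iff split_paired_all toggle_all_def mem_label_ideal_iff)
qed

lemma rho_step:
  assumes f: "f \<in> IncR P R"
  shows "rho P R i f \<in> IncR P R \<and>
    label_ideal P R (rho P R i f) =
      togT (Gamma P R) (gamma_cover P R)\<^sup>*\<^sup>* (\<lambda>(p, k). k) i (label_ideal P R f)"
proof -
  have fl: "f \<in> labelings P R" using f by (simp add: IncR_eq)
  have I: "label_ideal P R f \<in> ideals" using IncR_iff_label_ideal[OF fl] f by simp
  have "\<And>a b. gamma_cover P R a b \<Longrightarrow> (\<lambda>(p, k). k) a \<noteq> (\<lambda>(p, k). k) b"
    by (drule gamma_cover_snd_neq) (simp add: case_prod_unfold)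
  then have eq: "label_ideal P R (rho P R i f) =
      togT (Gamma P R) (gamma_cover P R)\<^sup>*\<^sup>* (\<lambda>(p, k). k) i (label_ideal P R f)"
    unfolding label_ideal_rho[OF f] by (rule gamma.togT_eq_toggle_all[OF finite_Gamma _ I, symmetric])
  have "togT (Gamma P R) (gamma_cover P R)\<^sup>*\<^sup>* (\<lambda>(p, k). k) i (label_ideal P R f) \<in> ideals"
    unfolding togT_def using I by (rule fold_toggle_order_ideal)
  moreover have rl: "rho P R i f \<in> labelings P R" using fl by (rule rho_in_labelings)
  ultimately have "rho P R i f \<in> IncR P R" using IncR_iff_label_ideal[OF rl] eq by simp
  with eq show ?thesis by simp
qed

lemma fold_rho:
  "f \<in> IncR P R \<Longrightarrow> fold (rho P R) xs f \<in> IncR P R \<and>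
    label_ideal P R (fold (rho P R) xs f) =
      fold (togT (Gamma P R) (gamma_cover P R)\<^sup>*\<^sup>* (\<lambda>(p, k). k)) xs (label_ideal P R f)"
  by (induction xs arbitrary: f) (simp_all add: rho_step)

lemma label_ideal_IncPro:
  assumes "f \<in> IncR P R"
  shows "label_ideal P R (IncPro P R f) =
    TogPro (Gamma P R) (gamma_cover P R)\<^sup>*\<^sup>* (\<lambda>(p, k). k) (label_ideal P R f)"
proof -
  have "finite (\<Union>p\<in>P. R p)" using finite_P finite_R by blast
  moreover have "(\<lambda>(p, k). k) ` Gamma P R \<subseteq> (\<Union>p\<in>P. R p)" by (auto simp: Gamma_def)
  ultimately have "fold (togT (Gamma P R) (gamma_cover P R)\<^sup>*\<^sup>* (\<lambda>(p, k). k))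
      (sorted_list_of_set (\<Union>p\<in>P. R p)) = TogPro (Gamma P R) (gamma_cover P R)\<^sup>*\<^sup>* (\<lambda>(p, k). k)"
    by (rule TogPro_eq_fold_superset)
  then show ?thesis using fold_rho[OF assms] unfolding IncPro_def by simp
qed

end

theorem theorem4p31:
  fixes P :: "'a::order set" and R :: "'a \<Rightarrow> int set"
  assumes "finite P"
    and "restriction_fun P R"
    and "consistent P R"
  shows "\<exists>\<phi>. bij_betw \<phi> (IncR P R) (order_ideals (Gamma P R) (gamma_le P R)) \<and>
           (\<forall>f\<in>IncR P R. \<phi> (IncPro P R f) =
              TogPro (Gamma P R) (gamma_le P R) (\<lambda>(p, k). k) (\<phi> f))"
proof -
  interpret restricted_poset P R using assms by unfold_locales
  show ?thesis
  proof (intro exI[of _ "label_ideal P R"] conjI ballI)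
    show "bij_betw (label_ideal P R) (IncR P R) (order_ideals (Gamma P R) (gamma_le P R))"
      unfolding gamma_le_def by (rule label_ideal_bij)
    fix f assume "f \<in> IncR P R"
    then show "label_ideal P R (IncPro P R f) =
        TogPro (Gamma P R) (gamma_le P R) (\<lambda>(p, k). k) (label_ideal P R f)"
      unfolding gamma_le_def by (rule label_ideal_IncPro)
  qed
qed

end
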